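(* For every positive integer $L$, $$\{(\mathbf{X},\mathbf{Y}) \in \mathbb{S}^L_{+}\times\mathbb{S}^L : -\mathbf{X}\preceq\mathbf{Y}\preceq\mathbf{X}\} = \operatorname{cl}\{(\mathbf{X},\mathbf{Y})\in\mathbb{S}^L_{++}\times\mathbb{S}^L : \mathbf{X}-\mathbf{Y}\mathbf{X}^{-1}\mathbf{Y}\succ 0\}.$$
   Context: $\mathbb{S}^L$, $\mathbb{S}^L_+$, $\mathbb{S}^L_{++}$ denote the real symmetric, positive semidefinite and positive definite $L\times L$ matrices; $\preceq$ and $\succ$ refer to the Loewner order; $\operatorname{cl}$ denotes closure. *)

theory Defs
  imports "HOL-Analysis.Analysis"
begin

text \<open>Real symmetric L x L matrices, with L = CARD('n).\<close>
definition symmetric_mat :: "real^'n^'n \<Rightarrow> bool" where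
  "symmetric_mat A \<longleftrightarrow> transpose A = A"

definition psd :: "real^'n^'n \<Rightarrow> bool" where
  "psd A \<longleftrightarrow> symmetric_mat A \<and> (\<forall>x. 0 \<le> x \<bullet> (A *v x))"

definition pd :: "real^'n^'n \<Rightarrow> bool" where
  "pd A \<longleftrightarrow> symmetric_mat A \<and> (\<forall>x. x \<noteq> 0 \<longrightarrow> 0 < x \<bullet> (A *v x))"

definition loewner_le :: "real^'n^'n \<Rightarrow> real^'n^'n \<Rightarrow> bool" where
  "loewner_le A B \<longleftrightarrow> psd (B - A)"

end

theory Submission
  imports Defs
begin

text \<open>
  For \<open>X \<succ> 0\<close> put \<open>w = X\<^sup>-\<^sup>1 Y x\<close>; then \<open>Y x = X w\<close> and the Schur complement
  has quadratic form \<open>x\<^sup>T X x - w\<^sup>T X w\<close>. If this is nonnegative, the Cauchy-Schwarz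
  inequality for the form of \<open>X\<close> gives \<open>|x\<^sup>T Y x| = |x\<^sup>T X w| \<le> x\<^sup>T X x\<close>, i.e.
  \<open>-X \<preceq> Y \<preceq> X\<close>. Conversely
  \<open>2 (x\<^sup>T X x - w\<^sup>T X w) = (x + w)\<^sup>T (X - Y) (x + w) + (x - w)\<^sup>T (X + Y) (x - w)\<close>,
  so \<open>X \<plusminus> Y \<succ> 0\<close> makes the Schur complement positive definite. The left-hand set is
  closed, and each of its points \<open>(X, Y)\<close> is the limit of \<open>(X + \<epsilon> I, Y)\<close>, which lies in
  the right-hand set.
\<close>

lemma transpose_add: "transpose (A + B) = transpose A + transpose (B::'a::ab_group_add^'n^'m)"
  by (simp add: transpose_def vec_eq_iff)

lemma transpose_diff: "transpose (A - B) = transpose A - transpose (B::'a::ab_group_add^'n^'m)"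
  by (simp add: transpose_def vec_eq_iff)

lemma symmetric_mat_inner_commute:
  assumes "symmetric_mat A"
  shows "u \<bullet> (A *v v) = v \<bullet> (A *v u)"
proof -
  have "u \<bullet> (A *v v) = (u v* A) \<bullet> v" by (simp add: dot_lmul_matrix)
  also have "u v* A = A *v u"
    using assms by (metis symmetric_mat_def transpose_matrix_vector)
  finally show ?thesis by (simp add: inner_commute)
qed

lemma symmetric_mat_quadratic_add:
  assumes "symmetric_mat A"
  shows "(u + v) \<bullet> (A *v (u + v)) = u \<bullet> (A *v u) + 2 * (u \<bullet> (A *v v)) + v \<bullet> (A *v v)"
  using symmetric_mat_inner_commute[OF assms, of v u]
  by (simp add: matrix_vector_right_distrib inner_add_left inner_add_right)

lemma symmetric_mat_quadratic_diff:
  assumes "symmetric_mat A"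
  shows "(u - v) \<bullet> (A *v (u - v)) = u \<bullet> (A *v u) - 2 * (u \<bullet> (A *v v)) + v \<bullet> (A *v v)"
  using symmetric_mat_inner_commute[OF assms, of v u]
  by (simp add: matrix_vector_mult_diff_distrib inner_diff_left inner_diff_right)

lemma pd_imp_psd: "pd A \<Longrightarrow> psd A"
  unfolding pd_def psd_def by (metis inner_zero_left order_refl order_less_imp_le)

lemma pd_invertible:
  assumes "pd X"
  shows "invertible X"
proof -
  have "X *v x = 0 \<Longrightarrow> x = 0" for x
    using assms unfolding pd_def by (metis inner_zero_right less_irrefl)
  then show ?thesis
    using matrix_left_invertible_ker invertible_left_inverse by blast
qed

lemma matrix_inv_right:
  assumes "invertible (A::'a::semiring_1^'n^'m)"
  shows "A ** matrix_inv A = mat 1"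
proof -
  have "A ** matrix_inv A = mat 1 \<and> matrix_inv A ** A = mat 1"
    using assms unfolding invertible_def matrix_inv_def by (rule someI_ex)
  then show ?thesis ..
qed

lemma symmetric_mat_matrix_inv:
  assumes "symmetric_mat X" and "invertible X"
  shows "symmetric_mat (matrix_inv X)"
proof -
  have "transpose (matrix_inv X) ** X = mat 1"
    using matrix_transpose_mul[of X "matrix_inv X"] matrix_inv_right[OF assms(2)] assms(1)
    by (metis symmetric_mat_def transpose_mat)
  then have "transpose (matrix_inv X) = transpose (matrix_inv X) ** (X ** matrix_inv X)"
    using matrix_inv_right[OF assms(2)] by (simp add: matrix_mul_rid)
  also have "\<dots> = matrix_inv X"
    using \<open>transpose (matrix_inv X) ** X = mat 1\<close> by (simp add: matrix_mul_assoc matrix_mul_lid)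
  finally show ?thesis by (simp add: symmetric_mat_def)
qed

lemma symmetric_mat_schur_complement:
  assumes "symmetric_mat X" and "symmetric_mat Y" and "invertible X"
  shows "symmetric_mat (X - Y ** matrix_inv X ** Y)"
  using assms symmetric_mat_matrix_inv[OF assms(1,3)]
  by (simp add: symmetric_mat_def transpose_diff matrix_transpose_mul matrix_mul_assoc)

lemma schur_complement_quadratic:
  fixes x :: "real^'n"
  assumes "invertible X" and "symmetric_mat Y"
  defines "w \<equiv> matrix_inv X *v (Y *v x)"
  shows "X *v w = Y *v x"
    and "x \<bullet> ((X - Y ** matrix_inv X ** Y) *v x) = x \<bullet> (X *v x) - w \<bullet> (X *v w)"
proof -
  have "X ** (matrix_inv X ** Y) = Y"
    by (metis matrix_mul_assoc matrix_inv_right[OF assms(1)] matrix_mul_lid)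
  then show Xw: "X *v w = Y *v x"
    unfolding w_def by (simp add: matrix_vector_mul_assoc)
  have "x \<bullet> ((Y ** matrix_inv X ** Y) *v x) = x \<bullet> (Y *v w)"
    unfolding w_def by (simp add: matrix_vector_mul_assoc matrix_mul_assoc)
  also have "\<dots> = w \<bullet> (X *v w)"
    using symmetric_mat_inner_commute[OF assms(2)] Xw by metis
  finally show "x \<bullet> ((X - Y ** matrix_inv X ** Y) *v x) = x \<bullet> (X *v x) - w \<bullet> (X *v w)"
    by (simp add: matrix_vector_mult_diff_rdistrib inner_diff_right)
qed

lemma loewner_le_iff_quadratic:
  assumes "symmetric_mat A" and "symmetric_mat B"
  shows "loewner_le A B \<longleftrightarrow> (\<forall>x. x \<bullet> (A *v x) \<le> x \<bullet> (B *v x))"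
  using assms
  by (simp add: loewner_le_def psd_def symmetric_mat_def transpose_diff
      matrix_vector_mult_diff_rdistrib inner_diff_right)

lemma abs_quadratic_le_of_psd_schur_complement:
  assumes X: "psd X" "invertible X" and Y: "symmetric_mat Y"
    and S: "psd (X - Y ** matrix_inv X ** Y)"
  shows "\<bar>x \<bullet> (Y *v x)\<bar> \<le> x \<bullet> (X *v x)"
proof -
  define w where "w = matrix_inv X *v (Y *v x)"
  have sX: "symmetric_mat X" using X psd_def by blast
  have "x \<bullet> (X *v w) = x \<bullet> (Y *v x)"
    using schur_complement_quadratic(1)[OF X(2) Y] unfolding w_def by simp
  moreover have "w \<bullet> (X *v w) \<le> x \<bullet> (X *v x)"
  proof -
    have "0 \<le> x \<bullet> ((X - Y ** matrix_inv X ** Y) *v x)"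
      using S psd_def by blast
    then show ?thesis
      using schur_complement_quadratic(2)[OF X(2) Y, of x] unfolding w_def by linarith
  qed
  moreover have "0 \<le> (x - w) \<bullet> (X *v (x - w))" and "0 \<le> (x + w) \<bullet> (X *v (x + w))"
    using X psd_def by auto
  ultimately show ?thesis
    using symmetric_mat_quadratic_add[OF sX, of x w] symmetric_mat_quadratic_diff[OF sX, of x w]
    by linarith
qed

lemma loewner_bounds_of_pd_schur_complement:
  assumes X: "pd X" and Y: "symmetric_mat Y" and S: "pd (X - Y ** matrix_inv X ** Y)"
  shows "loewner_le (- X) Y" and "loewner_le Y X"
proof -
  have sX: "symmetric_mat X" and sX': "symmetric_mat (- X)"
    using X by (auto simp: pd_def symmetric_mat_def transpose_def vec_eq_iff)
  have "(- X) *v x = - (X *v x)" for x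
    by (simp add: matrix_vector_mult_def vec_eq_iff sum_negf)
  moreover have "\<bar>x \<bullet> (Y *v x)\<bar> \<le> x \<bullet> (X *v x)" for x
    using abs_quadratic_le_of_psd_schur_complement[OF pd_imp_psd[OF X] pd_invertible[OF X] Y
        pd_imp_psd[OF S]] .
  ultimately show "loewner_le (- X) Y" and "loewner_le Y X"
    by (auto simp: loewner_le_iff_quadratic[OF sX' Y] loewner_le_iff_quadratic[OF Y sX] abs_le_iff)
      (metis minus_le_iff)
qed

lemma schur_complement_quadratic_split:
  fixes x :: "real^'n"
  assumes "invertible X" and "symmetric_mat X" and "symmetric_mat Y"
  defines "w \<equiv> matrix_inv X *v (Y *v x)"
  shows "2 * (x \<bullet> ((X - Y ** matrix_inv X ** Y) *v x))
    = (x + w) \<bullet> ((X - Y) *v (x + w)) + (x - w) \<bullet> ((X + Y) *v (x - w))"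
proof -
  have Xw: "X *v w = Y *v x"
    using schur_complement_quadratic(1)[OF assms(1,3)] unfolding w_def .
  have "x \<bullet> (Y *v w) = w \<bullet> (X *v w)"
    using symmetric_mat_inner_commute[OF assms(3), of x w] Xw by simp
  moreover have "x \<bullet> (X *v w) = w \<bullet> (X *v x)"
    by (rule symmetric_mat_inner_commute[OF assms(2)])
  ultimately show ?thesis
    using schur_complement_quadratic(2)[OF assms(1,3), of x] Xw
    unfolding w_def[symmetric]
    by (simp add: matrix_vector_mult_diff_rdistrib matrix_vector_mult_add_rdistrib
        matrix_vector_right_distrib matrix_vector_mult_diff_distrib
        inner_add_left inner_add_right inner_diff_left inner_diff_right)
qed

lemma pd_schur_complement_of_pd_add_diff:
  assumes X: "pd X" and Y: "symmetric_mat Y" and P: "pd (X + Y)" and M: "pd (X - Y)"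
  shows "pd (X - Y ** matrix_inv X ** Y)"
proof -
  have sX: "symmetric_mat X" using X pd_def by blast
  have inv: "invertible X" using X by (rule pd_invertible)
  have "0 < x \<bullet> ((X - Y ** matrix_inv X ** Y) *v x)" if "x \<noteq> 0" for x
  proof -
    define w where "w = matrix_inv X *v (Y *v x)"
    have "0 \<le> (x + w) \<bullet> ((X - Y) *v (x + w))" and "0 \<le> (x - w) \<bullet> ((X + Y) *v (x - w))"
      using P M pd_imp_psd psd_def by blast+
    moreover have "x + w \<noteq> 0 \<or> x - w \<noteq> 0"
    proof -
      have "2 *\<^sub>R x = (x + w) + (x - w)" by (simp add: algebra_simps scaleR_2)
      with that show ?thesis by auto
    qed
    then have "0 < (x + w) \<bullet> ((X - Y) *v (x + w)) \<or> 0 < (x - w) \<bullet> ((X + Y) *v (x - w))"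
      using P M pd_def by blast
    ultimately show ?thesis
      using schur_complement_quadratic_split[OF inv sX Y, of x] unfolding w_def by linarith
  qed
  then show ?thesis
    using symmetric_mat_schur_complement[OF sX Y inv] pd_def by blast
qed

lemma pd_add_scaled_identity:
  assumes "psd A" and "0 < e"
  shows "pd (A + e *\<^sub>R mat 1)"
proof -
  have "symmetric_mat (A + e *\<^sub>R mat 1)"
    using assms(1) by (simp add: psd_def symmetric_mat_def transpose_add transpose_scalar)
  moreover have "0 < x \<bullet> ((A + e *\<^sub>R mat 1) *v x)" if "x \<noteq> 0" for x
  proof -
    have "(e *\<^sub>R mat 1) *v x = e *\<^sub>R x"
      by (metis scaleR_matrix_vector_assoc matrix_vector_mul_lid)
    then have "x \<bullet> ((A + e *\<^sub>R mat 1) *v x) = x \<bullet> (A *v x) + e * (x \<bullet> x)"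
      by (simp add: matrix_vector_mult_add_rdistrib inner_add_right)
    moreover have "0 \<le> x \<bullet> (A *v x)" using assms(1) psd_def by blast
    ultimately show ?thesis using assms(2) that by (simp add: add_nonneg_pos)
  qed
  ultimately show ?thesis by (simp add: pd_def)
qed

lemma pd_schur_complement_add_scaled_identity:
  assumes X: "psd X" and Y: "symmetric_mat Y" and P: "psd (X + Y)" and M: "psd (X - Y)"
    and e: "0 < e"
  shows "pd (X + e *\<^sub>R mat 1)"
    and "pd (X + e *\<^sub>R mat 1 - Y ** matrix_inv (X + e *\<^sub>R mat 1) ** Y)"
proof -
  show X': "pd (X + e *\<^sub>R mat 1)"
    using X e by (rule pd_add_scaled_identity)
  have "pd (X + e *\<^sub>R mat 1 + Y)" and "pd (X + e *\<^sub>R mat 1 - Y)"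
    using pd_add_scaled_identity[OF P e] pd_add_scaled_identity[OF M e]
    by (simp_all add: algebra_simps)
  then show "pd (X + e *\<^sub>R mat 1 - Y ** matrix_inv (X + e *\<^sub>R mat 1) ** Y)"
    using pd_schur_complement_of_pd_add_diff[OF X' Y] by blast
qed

lemma bounded_linear_transpose: "bounded_linear (transpose :: real^'n^'m \<Rightarrow> real^'m^'n)"
  by (simp add: linear_conv_bounded_linear[symmetric] linearI transpose_def vec_eq_iff)

lemma bounded_linear_matrix_vector_mult_left: "bounded_linear (\<lambda>A::real^'n^'m. A *v x)"
  unfolding linear_conv_bounded_linear[symmetric]
  by (rule linearI) (simp_all add: matrix_vector_mult_add_rdistrib scaleR_matrix_vector_assoc)

lemma closed_symmetric_mat: "closed {A::real^'n^'n. symmetric_mat A}"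
  unfolding symmetric_mat_def
  by (intro closed_Collect_eq continuous_intros linear_continuous_on bounded_linear_transpose)

lemma closed_psd: "closed {A::real^'n^'n. psd A}"
proof -
  have "{A::real^'n^'n. psd A} = {A. symmetric_mat A} \<inter> (\<Inter>x. {A. 0 \<le> x \<bullet> (A *v x)})"
    by (auto simp: psd_def)
  also have "closed \<dots>"
    by (intro closed_Int closed_INT ballI closed_symmetric_mat closed_Collect_le continuous_intros
        linear_continuous_on[OF bounded_linear_matrix_vector_mult_left])
  finally show ?thesis .
qed

lemma closed_loewner_interval:
  "closed {(X :: real^'n^'n, Y). psd X \<and> symmetric_mat Y \<and> loewner_le (- X) Y \<and> loewner_le Y X}"
proof -
  have "{(X :: real^'n^'n, Y). psd X \<and> symmetric_mat Y \<and> loewner_le (- X) Y \<and> loewner_le Y X}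
    = fst -` {A. psd A} \<inter> snd -` {A. symmetric_mat A}
      \<inter> (\<lambda>p. snd p - - fst p) -` {A. psd A} \<inter> (\<lambda>p. fst p - snd p) -` {A. psd A}"
    by (auto simp: loewner_le_def)
  also have "closed \<dots>"
    by (intro closed_Int continuous_closed_vimage closed_psd closed_symmetric_mat continuous_intros)
  finally show ?thesis .
qed

theorem lemma2:
  shows "{(X :: real^'n^'n, Y :: real^'n^'n).
            psd X \<and> symmetric_mat Y \<and> loewner_le (- X) Y \<and> loewner_le Y X}
       = closure {(X :: real^'n^'n, Y :: real^'n^'n).
            pd X \<and> symmetric_mat Y \<and> pd (X - Y ** matrix_inv X ** Y)}"
    (is "?S = closure ?T")
proof
  have "?T \<subseteq> ?S"
    by (auto simp: pd_imp_psd loewner_bounds_of_pd_schur_complement)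
  then show "closure ?T \<subseteq> ?S"
    using closed_loewner_interval closure_minimal by blast
next
  show "?S \<subseteq> closure ?T"
  proof clarify
    fix X Y :: "real^'n^'n"
    assume X: "psd X" and Y: "symmetric_mat Y" and "loewner_le (- X) Y" and "loewner_le Y X"
    then have P: "psd (X + Y)" and M: "psd (X - Y)"
      by (simp_all add: loewner_le_def add.commute)
    define X' where "X' n = X + inverse (real (Suc n)) *\<^sub>R mat 1" for n
    have "(X' n, Y) \<in> ?T" for n
      using pd_schur_complement_add_scaled_identity[OF X Y P M, of "inverse (real (Suc n))"] Y
      unfolding X'_def by simp
    moreover have "(\<lambda>n. (X' n, Y)) \<longlonglongrightarrow> (X, Y)"
    proof -
      have "(\<lambda>n. inverse (real (Suc n)) *\<^sub>R (mat 1 :: real^'n^'n)) \<longlonglongrightarrow> 0"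
        using tendsto_scaleR[OF LIMSEQ_inverse_real_of_nat tendsto_const] by simp
      from tendsto_add[OF tendsto_const[of X] this] have "X' \<longlonglongrightarrow> X"
        unfolding X'_def by simp
      then show ?thesis
        by (intro tendsto_Pair tendsto_const)
    qed
    ultimately show "(X, Y) \<in> closure ?T"
      unfolding closure_sequential by (intro exI[of _ "\<lambda>n. (X' n, Y)"] conjI allI)
  qed
qed

end
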